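(* Let $d\ge1$, $\alpha>1$ and $p\in(0,1]$. For every $\zeta>0$ there exist $\theta\in(0,\zeta)$ and $N=N(\theta)\in\mathbb{N}$ such that for every $n>N$, every realization of $\omega_p$, every minimizing path $\pi_n$ for $T_n(\bar\omega_p)$ (with $\bar\omega_p$ built using this $\theta$ and $n$), and every $1\le i\le n$, \[\Delta\pi_n(i)\le n^{\zeta}.\]
   Context: Let $\{\eta(j,x)\}_{(j,x)\in\mathbb{N}\times\mathbb{Z}^d}$ be i.i.d. Bernoulli under $Q$ with $Q(\eta(0,0)=1)=p$. For $p\in(0,1)$ set $s_p=(\log\frac1p)^{1/d}$ and $\omega_p=\sum_{(k,x)\in\mathbb{N}\times\mathbb{Z}^d}(1-\eta(k,x))\delta_{(k,s_px)}$; $\omega_1$ is a Poisson point process on $\mathbb{N}\times\mathbb{R}^d$ with intensity counting measure $\times$ Lebesgue measure. Point measures are identified with their supports. Given $\theta>0$ and $n$, define \[\bar\omega_p=\omega_p+\sum_{(k,x)\in\mathbb{N}\times n^\theta\mathbb{Z}^d}1_{\{\omega_p(\{k\}\times(x+[0,n^\theta)^d))=0\}}\delta_{(k,x)}.\] For a configuration $\omega$, with $|x|_1=\sum_i|x_i|$, $T_n(\omega)=\min\{\sum_{k=1}^n|x_{k-1}-x_k|_1^\alpha:\ x_0=0,\ \{(k,x_k)\}_{k=1}^n\subset\omega\}$, and a minimizing path is a sequence $\pi_n=(\pi_n(1),\dots,\pi_n(n))$ attaining this minimum. With $\pi_n(0)=0$, $\Delta\pi_n(i)=|\pi_n(i)-\pi_n(i-1)|_1$.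 *)

theory Defs
  imports "HOL-Analysis.Analysis"
begin

text \<open>Points of the space-time configuration live in nat \<times> R^d, with R^d = real ^ 'd
  (d = CARD('d) \<ge> 1). Point measures are identified with their supports (sets).\<close>

definition l1norm :: "real ^ 'd \<Rightarrow> real" where
  "l1norm x = (\<Sum>i\<in>UNIV. \<bar>x $ i\<bar>)"

definition s_p :: "real \<Rightarrow> nat \<Rightarrow> real" where
  "s_p p d = (ln (1 / p)) powr (1 / real d)"

text \<open>Support of omega_p for a realization eta of the Bernoulli field (p < 1).\<close>
definition omega_lattice :: "real \<Rightarrow> ((nat \<times> (int ^ 'd)) \<Rightarrow> bool) \<Rightarrow> (nat \<times> (real ^ 'd)) set" where
  "omega_lattice p eta =
     {(k, s_p p CARD('d) *\<^sub>R (\<chi> i. real_of_int (x $ i))) | k x. \<not> eta (k, x)}"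

text \<open>Realizations of a Poisson point process on nat \<times> R^d: locally finite point sets.\<close>
definition locally_finite_config :: "(nat \<times> (real ^ 'd)) set \<Rightarrow> bool" where
  "locally_finite_config \<omega> \<longleftrightarrow> (\<forall>k B. bounded B \<longrightarrow> finite {x \<in> B. (k, x) \<in> \<omega>})"

definition realizations :: "real \<Rightarrow> (nat \<times> (real ^ 'd)) set set" where
  "realizations p =
     (if p < 1 then range (omega_lattice p) else {\<omega>. locally_finite_config \<omega>})"

definition scaled_lattice :: "real \<Rightarrow> (real ^ 'd) set" where
  "scaled_lattice s = {x. \<forall>i. \<exists>z::int. x $ i = s * real_of_int z}"

definition half_open_cube :: "real ^ 'd \<Rightarrow> real \<Rightarrow> (real ^ 'd) set" where
  "half_open_cube x s = {y. \<forall>i. x $ i \<le> y $ i \<and> y $ i < x $ i + s}"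

definition omega_bar :: "real \<Rightarrow> nat \<Rightarrow> (nat \<times> (real ^ 'd)) set \<Rightarrow> (nat \<times> (real ^ 'd)) set" where
  "omega_bar \<theta> n \<omega> = \<omega> \<union>
     {(k, x) | k x. x \<in> scaled_lattice (real n powr \<theta>) \<and>
        \<not> (\<exists>y \<in> half_open_cube x (real n powr \<theta>). (k, y) \<in> \<omega>)}"

definition admissible_path :: "nat \<Rightarrow> (nat \<times> (real ^ 'd)) set \<Rightarrow> (nat \<Rightarrow> real ^ 'd) \<Rightarrow> bool" where
  "admissible_path n \<omega> \<pi> \<longleftrightarrow> \<pi> 0 = 0 \<and> (\<forall>k\<in>{1..n}. (k, \<pi> k) \<in> \<omega>)"

definition path_cost :: "real \<Rightarrow> nat \<Rightarrow> (nat \<Rightarrow> real ^ 'd) \<Rightarrow> real" where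
  "path_cost \<alpha> n \<pi> = (\<Sum>k=1..n. l1norm (\<pi> (k - 1) - \<pi> k) powr \<alpha>)"

definition minimizing_path :: "real \<Rightarrow> nat \<Rightarrow> (nat \<times> (real ^ 'd)) set \<Rightarrow> (nat \<Rightarrow> real ^ 'd) \<Rightarrow> bool" where
  "minimizing_path \<alpha> n \<omega> \<pi> \<longleftrightarrow> admissible_path n \<omega> \<pi> \<and>
     (\<forall>\<pi>'. admissible_path n \<omega> \<pi>' \<longrightarrow> path_cost \<alpha> n \<pi> \<le> path_cost \<alpha> n \<pi>')"

end

theory Submission
  imports Defs
begin

text \<open>Every layer of \<open>omega_bar \<theta> n \<omega>\<close> has a point within \<open>l1\<close>-distance \<open>D = d n\<^sup>\<theta>\<close> of any
  given point. So a minimizing path can neither be improved by rerouting \<open>m\<close> consecutive steps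
  near the straight line joining their endpoints, which costs at most \<open>m (S / m + 2 D)\<^sup>\<alpha>\<close> when
  the steps have total length \<open>S\<close>, nor by rerouting all remaining steps near the current point.
  For the step lengths counted from a given step, strict convexity of \<open>t\<^sup>\<alpha>\<close> turns these two
  comparisons into a growth mechanism: a prefix of mean \<open>u \<ge> 4 D\<close> forces a prefix that is longer
  by a factor of order \<open>u / D\<close> and still has mean at least \<open>u / 4\<close>. Starting from a step longer
  than \<open>n\<^sup>2\<^sup>\<theta>\<close> and iterating \<open>K = 2 / \<theta>\<close> times yields more than \<open>n\<close> steps.\<close>

section \<open>Convexity of \<open>t powr \<alpha>\<close>\<close>

lemma powr_tangent_le:
  fixes \<alpha> u x :: real
  assumes "1 \<le> \<alpha>" and "0 < u" and "0 \<le> x"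
  shows "u powr \<alpha> + \<alpha> * u powr (\<alpha> - 1) * (x - u) \<le> x powr \<alpha>"
proof (cases "x = 0")
  case True
  have "u powr (\<alpha> - 1) * u = u powr \<alpha>"
    using \<open>0 < u\<close> by (simp add: powr_diff)
  then show ?thesis
    using True assms by (simp add: algebra_simps)
next
  case False
  have "(\<alpha> * u powr (\<alpha> - 1)) * (x - u) \<le> x powr \<alpha> - u powr \<alpha>"
  proof (rule convex_on_imp_above_tangent[OF powr_convex[OF \<open>1 \<le> \<alpha>\<close>]])
    show "((\<lambda>z. z powr \<alpha>) has_real_derivative \<alpha> * u powr (\<alpha> - 1)) (at u within {0<..})"
      using has_real_derivative_powr[OF \<open>0 < u\<close>] by (rule has_field_derivative_at_within)
  qed (use assms False in \<open>auto simp: interior_open\<close>)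
  then show ?thesis by simp
qed

lemma sum_powr_ge_tangent:
  fixes \<alpha> u :: real and s :: "'a \<Rightarrow> real"
  assumes "1 \<le> \<alpha>" and "0 < u" and "\<And>k. k \<in> A \<Longrightarrow> 0 \<le> s k"
  shows "real (card A) * u powr \<alpha> + \<alpha> * u powr (\<alpha> - 1) * (sum s A - real (card A) * u)
           \<le> (\<Sum>k\<in>A. s k powr \<alpha>)"
proof (cases "finite A")
  case True
  have "(\<Sum>k\<in>A. u powr \<alpha> + \<alpha> * u powr (\<alpha> - 1) * (s k - u)) \<le> (\<Sum>k\<in>A. s k powr \<alpha>)"
    using assms by (intro sum_mono powr_tangent_le) auto
  then show ?thesis
    by (simp add: sum.distrib sum_subtractf sum_distrib_left[symmetric]
        sum_distrib_right[symmetric] algebra_simps)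
qed simp

lemma one_plus_less_two_powr:
  fixes \<alpha> :: real
  assumes "1 < \<alpha>"
  shows "1 + \<alpha> < 2 powr \<alpha>"
proof -
  have "1 + \<alpha> < 2 * (1 + (\<alpha> - 1) * (2/3))"
    using assms by (simp add: field_simps)
  also have "\<dots> \<le> 2 * (1 + (\<alpha> - 1) * ln 2)"
    using ln2_ge_two_thirds assms by (intro mult_left_mono add_left_mono) auto
  also have "\<dots> \<le> 2 * exp ((\<alpha> - 1) * ln 2)"
    by (intro mult_left_mono exp_ge_add_one_self) simp
  also have "\<dots> = 2 powr \<alpha>"
    by (simp add: powr_def exp_diff algebra_simps)
  finally show ?thesis .
qed

text \<open>Over \<open>v \<le> u / 2\<close>, the Bregman divergence of \<open>t \<mapsto> t powr \<alpha>\<close> from \<open>u\<close> to \<open>v\<close> is smallest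
  at \<open>v = u / 2\<close>, where it equals \<open>\<alpha> * bregman_gain \<alpha> * u powr \<alpha>\<close>.\<close>

definition bregman_gain :: "real \<Rightarrow> real" where
  "bregman_gain \<alpha> = (1 - (1 + \<alpha>) / 2 powr \<alpha>) / \<alpha>"

lemma bregman_gain_pos: "1 < \<alpha> \<Longrightarrow> 0 < bregman_gain \<alpha>"
  using one_plus_less_two_powr[of \<alpha>] by (simp add: bregman_gain_def field_simps)

lemma powr_bregman_ge:
  fixes \<alpha> u v :: real
  assumes "1 < \<alpha>" and "0 < u" and "0 \<le> v" and "v \<le> u / 2"
  shows "\<alpha> * bregman_gain \<alpha> * u powr \<alpha> \<le> u powr \<alpha> - v powr \<alpha> - \<alpha> * v powr (\<alpha> - 1) * (u - v)"
proof -
  have tangent: "v powr \<alpha> + \<alpha> * v powr (\<alpha> - 1) * (u/2 - v) \<le> (u/2) powr \<alpha>"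
    using assms powr_tangent_le[of \<alpha> v "u/2"] by (cases "v = 0") auto
  have "\<alpha> * v powr (\<alpha> - 1) * (u/2) \<le> \<alpha> * (u/2) powr (\<alpha> - 1) * (u/2)"
    using assms by (intro mult_right_mono mult_left_mono powr_mono2) auto
  also have "\<dots> = \<alpha> * (u/2) powr \<alpha>"
    using \<open>0 < u\<close> by (simp add: powr_diff)
  finally have "u powr \<alpha> - (1 + \<alpha>) * (u/2) powr \<alpha>
      \<le> u powr \<alpha> - v powr \<alpha> - \<alpha> * v powr (\<alpha> - 1) * (u - v)"
    using tangent by (simp add: algebra_simps)
  moreover have "\<alpha> * bregman_gain \<alpha> * u powr \<alpha> = u powr \<alpha> - (1 + \<alpha>) * (u/2) powr \<alpha>"
    using assms by (simp add: bregman_gain_def powr_divide field_simps)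
  ultimately show ?thesis
    by linarith
qed

lemma sum_powr_ge_card_mean_powr:
  fixes \<alpha> :: real and s :: "'a \<Rightarrow> real"
  assumes "1 \<le> \<alpha>" and nonneg: "\<And>k. k \<in> A \<Longrightarrow> 0 \<le> s k"
  shows "real (card A) * (sum s A / real (card A)) powr \<alpha> \<le> (\<Sum>k\<in>A. s k powr \<alpha>)"
proof -
  define u where "u = sum s A / real (card A)"
  have "0 \<le> u"
    using nonneg by (simp add: u_def sum_nonneg)
  show ?thesis
  proof (cases "u = 0")
    case True
    have "0 \<le> (\<Sum>k\<in>A. s k powr \<alpha>)"
      by (simp add: sum_nonneg)
    with True show ?thesis
      unfolding u_def[symmetric] by simp
  next
    case False
    then have "card A \<noteq> 0"
      by (auto simp: u_def)
    then have "sum s A - real (card A) * u = 0"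
      by (simp add: u_def)
    moreover have "0 < u"
      using False \<open>0 \<le> u\<close> by simp
    then have "real (card A) * u powr \<alpha> + \<alpha> * u powr (\<alpha> - 1) * (sum s A - real (card A) * u)
        \<le> (\<Sum>k\<in>A. s k powr \<alpha>)"
      using nonneg by (rule sum_powr_ge_tangent[OF assms(1)])
    ultimately have "real (card A) * u powr \<alpha> \<le> (\<Sum>k\<in>A. s k powr \<alpha>)"
      by simp
    then show ?thesis
      by (simp only: u_def)
  qed
qed

section \<open>Prefix means of window-bounded step sequences\<close>

definition prefix_mean :: "(nat \<Rightarrow> real) \<Rightarrow> nat \<Rightarrow> real" where
  "prefix_mean s m = sum s {1..m} / real m"

lemma prefix_sum_eq_mean: "1 \<le> m \<Longrightarrow> sum s {1..m} = prefix_mean s m * real m"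
  by (simp add: prefix_mean_def)

lemma exists_first_mean_drop:
  fixes s :: "nat \<Rightarrow> real"
  assumes nonneg: "\<And>k. 0 \<le> s k" and "1 \<le> m" "m < N"
    and drop: "prefix_mean s N \<le> prefix_mean s m / 2"
  shows "\<exists>m'. m < m' \<and> m' \<le> N \<and>
           prefix_mean s m / 4 \<le> prefix_mean s m' \<and> prefix_mean s m' \<le> prefix_mean s m / 2"
proof -
  define u where "u = prefix_mean s m"
  have "0 \<le> u"
    using nonneg by (simp add: u_def prefix_mean_def sum_nonneg)
  define P where "P j \<longleftrightarrow> m < j \<and> prefix_mean s j \<le> u / 2" for j
  define m' where "m' = (LEAST j. P j)"
  have "P N"
    using assms by (simp add: P_def u_def)
  then have "P m'" "m' \<le> N"
    unfolding m'_def by (rule LeastI, rule Least_le)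
  then have m': "m < m'" "prefix_mean s m' \<le> u / 2"
    by (simp_all add: P_def)
  have "u / 4 * real m' = u / 2 * (real m' / 2)"
    by simp
  also have "\<dots> \<le> u / 2 * real (m' - 1)"
    using m' \<open>1 \<le> m\<close> \<open>0 \<le> u\<close> by (intro mult_left_mono) (auto simp: of_nat_diff)
  also have "\<dots> \<le> sum s {1..m' - 1}"
  proof (cases "m' - 1 = m")
    case True
    then show ?thesis
      using \<open>1 \<le> m\<close> nonneg by (simp add: u_def prefix_mean_def sum_nonneg)
  next
    case False
    then have "m < m' - 1"
      using m' by linarith
    moreover have "\<not> P (m' - 1)"
      using m' unfolding m'_def by (intro not_less_Least) auto
    ultimately have "u / 2 \<le> prefix_mean s (m' - 1)"
      by (simp add: P_def)
    then show ?thesis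
      using \<open>m < m' - 1\<close> by (simp add: prefix_mean_def field_simps)
  qed
  also have "\<dots> \<le> sum s {1..m'}"
    using nonneg by (intro sum_mono2) auto
  finally have "u / 4 \<le> prefix_mean s m'"
    using m' \<open>1 \<le> m\<close> by (simp add: prefix_mean_def field_simps)
  with m' \<open>m' \<le> N\<close> show ?thesis
    unfolding u_def by blast
qed

text \<open>Models the lengths \<open>s 1, \<dots>, s N\<close> of the last \<open>N\<close> steps of a minimizing path, with
  \<open>c = 2 D\<close>: the two assumptions are the two rerouting comparisons.\<close>

locale window_bounded_steps =
  fixes \<alpha> c :: real and s :: "nat \<Rightarrow> real" and N :: nat
  assumes alpha_gt_1: "1 < \<alpha>" and c_pos: "0 < c" and s_nonneg: "\<And>k. 0 \<le> s k" and N_pos: "1 \<le> N"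
    and window_bound:
      "\<And>m. 1 \<le> m \<Longrightarrow> m \<le> N \<Longrightarrow> (\<Sum>k=1..m. s k powr \<alpha>) \<le> real m * (prefix_mean s m + c) powr \<alpha>"
    and total_bound: "(\<Sum>k=1..N. s k powr \<alpha>) \<le> real N * c powr \<alpha>"
begin

lemma total_mean_le: "prefix_mean s N \<le> c"
proof -
  have "real N * prefix_mean s N powr \<alpha> \<le> real N * c powr \<alpha>"
    using sum_powr_ge_card_mean_powr[of \<alpha> "{1..N}" s] alpha_gt_1 s_nonneg total_bound
    by (simp add: prefix_mean_def)
  then have "prefix_mean s N powr \<alpha> \<le> c powr \<alpha>"
    using N_pos by simp
  show ?thesis
  proof (rule ccontr)
    assume "\<not> ?thesis"
    then have "c powr \<alpha> < prefix_mean s N powr \<alpha>"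
      using alpha_gt_1 c_pos by (intro powr_less_mono2) auto
    with \<open>prefix_mean s N powr \<alpha> \<le> c powr \<alpha>\<close> show False
      by simp
  qed
qed

text \<open>Jensen bounds the cost of the first \<open>m\<close> steps from below by \<open>m u powr \<alpha>\<close> and that of the
  following \<open>m' - m\<close> steps by the tangent at \<open>u'\<close>; the deficit is the Bregman divergence,
  while the window bound at \<open>m'\<close> lets the total exceed \<open>m' u' powr \<alpha>\<close> by at most about \<open>m' c\<close>.\<close>

lemma mean_drop_forces_growth:
  assumes "1 \<le> m" "m < m'" "m' \<le> N" and large: "2 * c \<le> prefix_mean s m"
    and "0 < prefix_mean s m'" and drop: "prefix_mean s m' \<le> prefix_mean s m / 2"
  shows "bregman_gain \<alpha> * (prefix_mean s m / c) * real m \<le> real m'"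
proof -
  define u where "u = prefix_mean s m"
  define u' where "u' = prefix_mean s m'"
  define F where "F = (\<lambda>A. \<Sum>k\<in>A. s k powr \<alpha>)"
  have "0 < u" "0 < u'"
    using large c_pos assms by (auto simp: u_def u'_def)
  have split: "{1..m'} = {1..m} \<union> {m<..m'}"
    using assms by auto
  have first: "real m * u powr \<alpha> \<le> F {1..m}"
    using sum_powr_ge_card_mean_powr[of \<alpha> "{1..m}" s] alpha_gt_1 s_nonneg
    by (simp add: F_def u_def prefix_mean_def)
  have "sum s {1..m'} = sum s {1..m} + sum s {m<..m'}"
    unfolding split by (rule sum.union_disjoint) auto
  then have "sum s {m<..m'} - real (m' - m) * u' = real m * (u' - u)"
    using prefix_sum_eq_mean[of m s] prefix_sum_eq_mean[of m' s] assms
    by (simp add: u_def u'_def of_nat_diff algebra_simps)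
  then have second: "real (m' - m) * u' powr \<alpha> + \<alpha> * u' powr (\<alpha> - 1) * (real m * (u' - u))
      \<le> F {m<..m'}"
    using sum_powr_ge_tangent[of \<alpha> u' "{m<..m'}" s] alpha_gt_1 s_nonneg \<open>0 < u'\<close>
    by (simp add: F_def)
  have "F {1..m'} \<le> real m' * (u' + c) powr \<alpha>"
    using window_bound[of m'] assms by (simp add: F_def u'_def)
  moreover have "F {1..m'} = F {1..m} + F {m<..m'}"
    unfolding F_def split by (rule sum.union_disjoint) auto
  ultimately have "real m * u powr \<alpha> + (real (m' - m) * u' powr \<alpha>
      + \<alpha> * u' powr (\<alpha> - 1) * (real m * (u' - u))) \<le> real m' * (u' + c) powr \<alpha>"
    using first second by linarith
  then have key: "real m * (u powr \<alpha> - u' powr \<alpha> - \<alpha> * u' powr (\<alpha> - 1) * (u - u'))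
      \<le> real m' * ((u' + c) powr \<alpha> - u' powr \<alpha>)"
    using assms by (simp add: of_nat_diff algebra_simps)
  have "real m * (\<alpha> * bregman_gain \<alpha> * u powr \<alpha>)
      \<le> real m * (u powr \<alpha> - u' powr \<alpha> - \<alpha> * u' powr (\<alpha> - 1) * (u - u'))"
    using powr_bregman_ge[OF alpha_gt_1 \<open>0 < u\<close>] \<open>0 < u'\<close> drop
    by (intro mult_left_mono) (auto simp: u_def u'_def)
  also have "\<dots> \<le> real m' * ((u' + c) powr \<alpha> - u' powr \<alpha>)"
    by (rule key)
  also have "\<dots> \<le> real m' * (\<alpha> * (u' + c) powr (\<alpha> - 1) * c)"
    using powr_tangent_le[of \<alpha> "u' + c" u'] alpha_gt_1 \<open>0 < u'\<close> c_pos
    by (intro mult_left_mono) (auto simp: algebra_simps)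
  also have "\<dots> \<le> real m' * (\<alpha> * u powr (\<alpha> - 1) * c)"
    using drop large \<open>0 < u'\<close> c_pos alpha_gt_1
    by (intro mult_left_mono mult_right_mono powr_mono2) (auto simp: u_def u'_def)
  finally have "real m * (\<alpha> * bregman_gain \<alpha> * u powr \<alpha>) \<le> real m' * (\<alpha> * u powr (\<alpha> - 1) * c)" .
  moreover have "u powr \<alpha> = u powr (\<alpha> - 1) * u"
    using \<open>0 < u\<close> by (simp add: powr_diff)
  ultimately have "(\<alpha> * u powr (\<alpha> - 1)) * (bregman_gain \<alpha> * u * real m)
      \<le> (\<alpha> * u powr (\<alpha> - 1)) * (real m' * c)"
    by (simp only: ac_simps)
  then have "bregman_gain \<alpha> * u * real m \<le> real m' * c"
    by (rule mult_left_le_imp_le) (use alpha_gt_1 \<open>0 < u\<close> in simp)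
  then show ?thesis
    using c_pos by (simp add: u_def divide_simps ac_simps)
qed

lemma exists_longer_prefix_with_large_mean:
  assumes "1 \<le> m" "m \<le> N" and large: "2 * c \<le> prefix_mean s m"
  shows "\<exists>m'. m < m' \<and> m' \<le> N \<and> prefix_mean s m / 4 \<le> prefix_mean s m' \<and>
           bregman_gain \<alpha> * (prefix_mean s m / c) * real m \<le> real m'"
proof -
  have drop: "prefix_mean s N \<le> prefix_mean s m / 2"
    using total_mean_le large by linarith
  have "m \<noteq> N"
  proof
    assume "m = N"
    then show False
      using total_mean_le large c_pos by simp
  qed
  then obtain m' where m': "m < m'" "m' \<le> N" "prefix_mean s m / 4 \<le> prefix_mean s m'"
      "prefix_mean s m' \<le> prefix_mean s m / 2"
    using exists_first_mean_drop[OF s_nonneg \<open>1 \<le> m\<close> _ drop] \<open>m \<le> N\<close> by fastforce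
  moreover have "0 < prefix_mean s m'"
    using m'(3) large c_pos by linarith
  ultimately show ?thesis
    using mean_drop_forces_growth[OF \<open>1 \<le> m\<close> m'(1,2) large] by blast
qed

text \<open>Each application of the previous lemma loses a factor \<open>4\<close> in the mean but multiplies the
  prefix length by at least the current mean over \<open>c\<close>, up to a constant.\<close>

lemma large_first_step_forces_length:
  assumes large: "2 * c * 4 ^ K \<le> s 1"
  shows "(bregman_gain \<alpha> * s 1 / (4 ^ K * c)) ^ K \<le> real N"
proof -
  define G where "G = bregman_gain \<alpha> * s 1 / (4 ^ K * c)"
  have "0 \<le> G"
    using bregman_gain_pos[OF alpha_gt_1] s_nonneg c_pos by (simp add: G_def)
  have "\<exists>m. 1 \<le> m \<and> m \<le> N \<and> s 1 / 4 ^ t \<le> prefix_mean s m \<and> G ^ t \<le> real m" if "t \<le> K" for t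
    using that
  proof (induction t)
    case 0
    show ?case
      using N_pos by (intro exI[of _ 1]) (simp add: prefix_mean_def)
  next
    case (Suc t)
    then obtain m where m: "1 \<le> m" "m \<le> N" "s 1 / 4 ^ t \<le> prefix_mean s m" "G ^ t \<le> real m"
      by auto
    have "s 1 / 4 ^ K \<le> s 1 / 4 ^ t"
      using s_nonneg Suc.prems by (intro divide_left_mono) auto
    then have mean: "s 1 / 4 ^ K \<le> prefix_mean s m"
      using m by linarith
    moreover have "2 * c \<le> s 1 / 4 ^ K"
      using large by (simp add: field_simps)
    ultimately have "2 * c \<le> prefix_mean s m"
      by linarith
    then obtain m' where m': "m < m'" "m' \<le> N" "prefix_mean s m / 4 \<le> prefix_mean s m'"
        "bregman_gain \<alpha> * (prefix_mean s m / c) * real m \<le> real m'"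
      using exists_longer_prefix_with_large_mean[OF m(1,2)] by blast
    have "G = bregman_gain \<alpha> * (s 1 / 4 ^ K / c)"
      by (simp add: G_def)
    also have "\<dots> \<le> bregman_gain \<alpha> * (prefix_mean s m / c)"
      using mean bregman_gain_pos[OF alpha_gt_1] c_pos
      by (intro mult_left_mono divide_right_mono) auto
    finally have "G \<le> bregman_gain \<alpha> * (prefix_mean s m / c)" .
    then have "G * G ^ t \<le> bregman_gain \<alpha> * (prefix_mean s m / c) * real m"
      using m(4) \<open>0 \<le> G\<close> by (intro mult_mono) auto
    then have "G ^ Suc t \<le> bregman_gain \<alpha> * (prefix_mean s m / c) * real m"
      by simp
    moreover have "s 1 / 4 ^ Suc t \<le> prefix_mean s m / 4"
      using m(3) by simp
    ultimately show ?case
      using m m' by (intro exI[of _ m']) auto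
  qed
  from this[of K] obtain m where "m \<le> N" "G ^ K \<le> real m"
    by auto
  then show ?thesis
    unfolding G_def by linarith
qed

end

section \<open>Rerouting minimizing paths\<close>

lemma l1norm_nonneg: "0 \<le> l1norm x"
  unfolding l1norm_def by (simp add: sum_nonneg)

lemma l1norm_zero [simp]: "l1norm 0 = 0"
  unfolding l1norm_def by simp

lemma l1norm_triangle: "l1norm (x + y) \<le> l1norm x + l1norm y"
  unfolding l1norm_def by (simp add: sum.distrib[symmetric] sum_mono abs_triangle_ineq)

lemma l1norm_minus_commute: "l1norm (x - y) = l1norm (y - x)"
  unfolding l1norm_def by (simp add: abs_minus_commute)

lemma l1norm_uminus [simp]: "l1norm (- x) = l1norm x"
  unfolding l1norm_def by simp

lemma l1norm_scaleR: "l1norm (r *\<^sub>R x) = \<bar>r\<bar> * l1norm x"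
  unfolding l1norm_def by (simp add: abs_mult sum_distrib_left)

lemma l1norm_triangle_diff:
  fixes x y z :: "real ^ 'd"
  shows "l1norm (x - z) \<le> l1norm (x - y) + l1norm (y - z)"
  using l1norm_triangle[of "x - y" "y - z"] by simp

lemma l1norm_telescope:
  fixes \<pi> :: "nat \<Rightarrow> real ^ 'd"
  shows "l1norm (\<pi> (a + m) - \<pi> a) \<le> (\<Sum>k\<in>{a<..a + m}. l1norm (\<pi> (k - 1) - \<pi> k))"
proof (induction m)
  case (Suc m)
  have "l1norm (\<pi> (a + Suc m) - \<pi> a) \<le> l1norm (\<pi> (a + m) - \<pi> (a + Suc m)) + l1norm (\<pi> (a + m) - \<pi> a)"
    using l1norm_triangle_diff[where x = "\<pi> (a + Suc m)" and y = "\<pi> (a + m)" and z = "\<pi> a"]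
      l1norm_minus_commute[of "\<pi> (a + m)" "\<pi> (a + Suc m)"] by linarith
  also have "\<dots> \<le> (\<Sum>k\<in>{a<..a + Suc m}. l1norm (\<pi> (k - 1) - \<pi> k))"
    using Suc by (simp add: atLeastSucAtMost_greaterThanAtMost[symmetric])
  finally show ?case .
qed simp

lemma l1norm_le_card_mul:
  fixes x y :: "real ^ 'd"
  assumes "\<And>i. \<bar>x $ i - y $ i\<bar> \<le> L"
  shows "l1norm (x - y) \<le> real CARD('d) * L"
  using sum_mono[of UNIV "\<lambda>i. \<bar>(x - y) $ i\<bar>" "\<lambda>_. L"] assms by (simp add: l1norm_def)

lemma exists_scaled_lattice_cube:
  fixes y :: "real ^ 'd"
  assumes "0 < L"
  shows "\<exists>x \<in> scaled_lattice L. y \<in> half_open_cube x L"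
proof
  define x :: "real ^ 'd" where "x = (\<chi> i. L * of_int \<lfloor>y $ i / L\<rfloor>)"
  show "x \<in> scaled_lattice L"
    by (auto simp: scaled_lattice_def x_def)
  have "L * of_int \<lfloor>y $ i / L\<rfloor> \<le> L * (y $ i / L)" for i
    using assms by (intro mult_left_mono) auto
  moreover have "L * (y $ i / L) < L * (of_int \<lfloor>y $ i / L\<rfloor> + 1)" for i
    using assms by (intro mult_strict_left_mono) auto
  ultimately have "L * of_int \<lfloor>y $ i / L\<rfloor> \<le> y $ i \<and> y $ i < L * of_int \<lfloor>y $ i / L\<rfloor> + L" for i
    using assms by (simp add: algebra_simps)
  then show "y \<in> half_open_cube x L"
    by (simp add: half_open_cube_def x_def)
qed

definition layerwise_dense :: "real \<Rightarrow> (nat \<times> (real ^ 'd::finite)) set \<Rightarrow> bool" where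
  "layerwise_dense D W \<longleftrightarrow> (\<forall>k y. \<exists>z. (k, z) \<in> W \<and> l1norm (z - y) \<le> D)"

lemma layerwise_dense_nonneg: "layerwise_dense D W \<Longrightarrow> 0 \<le> D"
  unfolding layerwise_dense_def using l1norm_nonneg order_trans by blast

text \<open>Every point \<open>y\<close> lies in a cube of side \<open>n powr \<theta>\<close> with corner on the lattice; that cube
  either meets \<open>\<omega>\<close> or its corner has been added to \<open>omega_bar\<close>.\<close>

lemma omega_bar_layerwise_dense:
  fixes \<omega> :: "(nat \<times> (real ^ 'd)) set"
  assumes "0 < n"
  shows "layerwise_dense (real CARD('d) * real n powr \<theta>) (omega_bar \<theta> n \<omega>)"
  unfolding layerwise_dense_def
proof (intro allI)
  fix k and y :: "real ^ 'd"
  define L where "L = real n powr \<theta>"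
  have "0 < L"
    using assms by (simp add: L_def)
  then obtain x where x: "x \<in> scaled_lattice L" "y \<in> half_open_cube x L"
    using exists_scaled_lattice_cube by blast
  have close: "l1norm (z - y) \<le> real CARD('d) * L" if "z \<in> half_open_cube x L" for z
  proof (rule l1norm_le_card_mul)
    fix i
    have "x $ i \<le> z $ i" "z $ i < x $ i + L" "x $ i \<le> y $ i" "y $ i < x $ i + L"
      using that x(2) by (auto simp: half_open_cube_def)
    then show "\<bar>z $ i - y $ i\<bar> \<le> L"
      by (simp add: abs_le_iff)
  qed
  show "\<exists>z. (k, z) \<in> omega_bar \<theta> n \<omega> \<and> l1norm (z - y) \<le> real CARD('d) * real n powr \<theta>"
  proof (cases "\<exists>z \<in> half_open_cube x L. (k, z) \<in> \<omega>")
    case True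
    then show ?thesis
      using close by (auto simp: omega_bar_def L_def)
  next
    case False
    moreover have "x \<in> half_open_cube x L"
      using \<open>0 < L\<close> by (simp add: half_open_cube_def)
    ultimately show ?thesis
      using close x(1) by (intro exI[of _ x]) (auto simp: omega_bar_def L_def)
  qed
qed

text \<open>The competitor follows points of \<open>W\<close> within \<open>D\<close> of \<open>y\<close> strictly between times \<open>a\<close> and \<open>b\<close>
  and agrees with \<open>\<pi>\<close> elsewhere; if \<open>b > n\<close> the path ends inside the window and \<open>y b\<close> is free.\<close>

lemma minimizing_path_reroute:
  fixes \<pi> y :: "nat \<Rightarrow> real ^ 'd"
  assumes mp: "minimizing_path \<alpha> n W \<pi>" and "0 < \<alpha>" and dense: "layerwise_dense D W"
    and "y a = \<pi> a" and "b \<le> n \<Longrightarrow> y b = \<pi> b" and "a < b"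
  shows "(\<Sum>k\<in>{a<..min b n}. l1norm (\<pi> (k - 1) - \<pi> k) powr \<alpha>)
       \<le> (\<Sum>k\<in>{a<..min b n}. (l1norm (y (k - 1) - y k) + 2 * D) powr \<alpha>)"
proof -
  have "\<forall>k. \<exists>z. (k, z) \<in> W \<and> l1norm (z - y k) \<le> D"
    using dense by (simp add: layerwise_dense_def)
  then obtain z where z: "\<And>k. (k, z k) \<in> W" "\<And>k. l1norm (z k - y k) \<le> D"
    using choice[of "\<lambda>k z. (k, z) \<in> W \<and> l1norm (z - y k) \<le> D"] by blast
  define \<pi>' where "\<pi>' k = (if a < k \<and> k < b then z k else \<pi> k)" for k
  define cost where "cost p k = l1norm (p (k - 1) - p k) powr \<alpha>" for p :: "nat \<Rightarrow> real ^ 'd" and k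
  define I where "I = {a<..min b n}"
  have "admissible_path n W \<pi>'"
    using mp z(1) by (simp add: minimizing_path_def admissible_path_def \<pi>'_def)
  then have "path_cost \<alpha> n \<pi> \<le> path_cost \<alpha> n \<pi>'"
    using mp by (simp add: minimizing_path_def)
  moreover have "path_cost \<alpha> n p = sum (cost p) ({1..n} - I) + sum (cost p) I" for p
    unfolding path_cost_def cost_def I_def by (rule sum.subset_diff) auto
  moreover have "sum (cost \<pi>) ({1..n} - I) = sum (cost \<pi>') ({1..n} - I)"
    by (intro sum.cong) (auto simp: cost_def \<pi>'_def I_def)
  ultimately have "sum (cost \<pi>) I \<le> sum (cost \<pi>') I"
    by simp
  also have "\<dots> \<le> (\<Sum>k\<in>I. (l1norm (y (k - 1) - y k) + 2 * D) powr \<alpha>)"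
  proof (rule sum_mono)
    fix k assume "k \<in> I"
    have near: "l1norm (\<pi>' j - y j) \<le> D" if "a \<le> j" "j \<le> b" "j \<le> n" for j
      using z(2)[of j] assms that layerwise_dense_nonneg[OF dense]
      by (cases "a < j \<and> j < b") (auto simp: \<pi>'_def le_less)
    have "l1norm (\<pi>' (k - 1) - \<pi>' k)
        \<le> l1norm (\<pi>' (k - 1) - y (k - 1)) + l1norm (y (k - 1) - y k) + l1norm (y k - \<pi>' k)"
      using l1norm_triangle_diff[where x = "\<pi>' (k - 1)" and y = "y (k - 1)" and z = "\<pi>' k"]
        l1norm_triangle_diff[where x = "y (k - 1)" and y = "y k" and z = "\<pi>' k"] by linarith
    moreover have "l1norm (\<pi>' (k - 1) - y (k - 1)) \<le> D" "l1norm (y k - \<pi>' k) \<le> D"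
      using near[of "k - 1"] near[of k] \<open>k \<in> I\<close> l1norm_minus_commute[of "y k" "\<pi>' k"]
      by (auto simp: I_def)
    ultimately have "l1norm (\<pi>' (k - 1) - \<pi>' k) \<le> l1norm (y (k - 1) - y k) + 2 * D"
      by linarith
    then show "cost \<pi>' k \<le> (l1norm (y (k - 1) - y k) + 2 * D) powr \<alpha>"
      unfolding cost_def using \<open>0 < \<alpha>\<close> by (intro powr_mono2) (auto simp: l1norm_nonneg)
  qed
  finally show ?thesis
    by (simp add: cost_def I_def)
qed

lemma sum_greaterThanAtMost_shift:
  fixes a m :: nat
  shows "(\<Sum>k\<in>{a<..a + m}. f k) = (\<Sum>j=1..m. f (a + j))"
  by (rule sum.reindex_bij_witness[of _ "\<lambda>j. a + j" "\<lambda>k. k - a"]) auto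

text \<open>Comparison with the straight line from \<open>\<pi> a\<close> to \<open>\<pi> (a + m)\<close>, whose steps all have the
  length of the displacement over \<open>m\<close>.\<close>

lemma minimizing_path_window_bound:
  fixes \<pi> :: "nat \<Rightarrow> real ^ 'd"
  assumes mp: "minimizing_path \<alpha> n W \<pi>" and "0 < \<alpha>" and dense: "layerwise_dense D W"
    and "a + m \<le> n" and "1 \<le> m"
  shows "(\<Sum>k\<in>{a<..a + m}. l1norm (\<pi> (k - 1) - \<pi> k) powr \<alpha>)
     \<le> real m * ((\<Sum>k\<in>{a<..a + m}. l1norm (\<pi> (k - 1) - \<pi> k)) / real m + 2 * D) powr \<alpha>"
proof -
  define S where "S = (\<Sum>k\<in>{a<..a + m}. l1norm (\<pi> (k - 1) - \<pi> k))"
  define v where "v = \<pi> (a + m) - \<pi> a"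
  define y where "y k = \<pi> a + ((real k - real a) / real m) *\<^sub>R v" for k
  have "y (k - 1) - y k = (- 1 / real m) *\<^sub>R v" if "a < k" for k
  proof -
    have "(real (k - 1) - real a) / real m - (real k - real a) / real m = - 1 / real m"
      using that by (simp add: of_nat_diff diff_divide_distrib[symmetric])
    then show ?thesis
      by (simp add: y_def scaleR_diff_left[symmetric])
  qed
  then have "l1norm (y (k - 1) - y k) = l1norm v / real m" if "a < k" for k
    using that by (simp add: l1norm_scaleR)
  moreover have "l1norm v / real m \<le> S / real m"
    unfolding v_def S_def by (intro divide_right_mono l1norm_telescope) simp
  ultimately have step: "l1norm (y (k - 1) - y k) \<le> S / real m" if "a < k" for k
    using that by simp
  have "(\<Sum>k\<in>{a<..a + m}. l1norm (\<pi> (k - 1) - \<pi> k) powr \<alpha>)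
      \<le> (\<Sum>k\<in>{a<..a + m}. (l1norm (y (k - 1) - y k) + 2 * D) powr \<alpha>)"
    using minimizing_path_reroute[OF mp \<open>0 < \<alpha>\<close> dense, of y a "a + m"] assms
    by (simp add: y_def v_def)
  also have "\<dots> \<le> (\<Sum>k\<in>{a<..a + m}. (S / real m + 2 * D) powr \<alpha>)"
    using step \<open>0 < \<alpha>\<close> layerwise_dense_nonneg[OF dense]
    by (intro sum_mono powr_mono2) (auto simp: l1norm_nonneg)
  finally show ?thesis
    by (simp add: S_def)
qed

text \<open>Comparison with the path that stays at \<open>\<pi> a\<close> from time \<open>a\<close> on.\<close>

lemma minimizing_path_tail_bound:
  fixes \<pi> :: "nat \<Rightarrow> real ^ 'd"
  assumes mp: "minimizing_path \<alpha> n W \<pi>" and "0 < \<alpha>" and dense: "layerwise_dense D W"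
    and "a < n"
  shows "(\<Sum>k\<in>{a<..n}. l1norm (\<pi> (k - 1) - \<pi> k) powr \<alpha>) \<le> real (n - a) * (2 * D) powr \<alpha>"
  using minimizing_path_reroute[OF mp \<open>0 < \<alpha>\<close> dense, of "\<lambda>_. \<pi> a" a "n + 1"] \<open>a < n\<close> by simp

lemma minimizing_path_window_bounded_steps:
  fixes \<pi> :: "nat \<Rightarrow> real ^ 'd"
  assumes "1 < \<alpha>" and mp: "minimizing_path \<alpha> n W \<pi>" and dense: "layerwise_dense D W"
    and "0 < D" and "a < n"
  shows "window_bounded_steps \<alpha> (2 * D) (\<lambda>j. l1norm (\<pi> (a + j - 1) - \<pi> (a + j))) (n - a)"
proof
  fix m assume "1 \<le> m" "m \<le> n - a"
  then show "(\<Sum>j=1..m. l1norm (\<pi> (a + j - 1) - \<pi> (a + j)) powr \<alpha>)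
      \<le> real m * (prefix_mean (\<lambda>j. l1norm (\<pi> (a + j - 1) - \<pi> (a + j))) m + 2 * D) powr \<alpha>"
    using minimizing_path_window_bound[OF mp _ dense, of a m] \<open>1 < \<alpha>\<close>
    by (simp add: sum_greaterThanAtMost_shift prefix_mean_def)
next
  have "(\<Sum>j=1..n - a. l1norm (\<pi> (a + j - 1) - \<pi> (a + j)) powr \<alpha>)
      = (\<Sum>k\<in>{a<..a + (n - a)}. l1norm (\<pi> (k - 1) - \<pi> k) powr \<alpha>)"
    by (simp add: sum_greaterThanAtMost_shift)
  also have "\<dots> \<le> real (n - a) * (2 * D) powr \<alpha>"
    using minimizing_path_tail_bound[OF mp _ dense \<open>a < n\<close>] \<open>1 < \<alpha>\<close> \<open>a < n\<close> by simp
  finally show "(\<Sum>j=1..n - a. l1norm (\<pi> (a + j - 1) - \<pi> (a + j)) powr \<alpha>)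
      \<le> real (n - a) * (2 * D) powr \<alpha>" .
qed (use assms l1norm_nonneg in auto)

section \<open>Steps of minimizing paths in \<open>omega_bar\<close>\<close>

lemma minimizing_path_long_step_bound:
  fixes \<omega> :: "(nat \<times> (real ^ 'd)) set" and \<pi> :: "nat \<Rightarrow> real ^ 'd" and n :: nat and \<theta> :: real
  defines "L \<equiv> real n powr \<theta>"
  assumes "1 < \<alpha>" and mp: "minimizing_path \<alpha> n (omega_bar \<theta> n \<omega>) \<pi>" and "i \<in> {1..n}"
    and large_L: "4 * real CARD('d) * 4 ^ K \<le> L"
    and long_step: "L\<^sup>2 < l1norm (\<pi> i - \<pi> (i - 1))"
  shows "(bregman_gain \<alpha> / (2 * real CARD('d) * 4 ^ K) * L) ^ K \<le> real n"
proof -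
  define D where "D = real CARD('d) * L"
  define a where "a = i - 1"
  define s where "s j = l1norm (\<pi> (a + j - 1) - \<pi> (a + j))" for j
  have "0 < L" "a < n"
    using \<open>i \<in> {1..n}\<close> by (auto simp: L_def a_def)
  then have "0 < D"
    by (simp add: D_def)
  have "window_bounded_steps \<alpha> (2 * D) s (n - a)"
    unfolding s_def D_def L_def
    using minimizing_path_window_bounded_steps[OF \<open>1 < \<alpha>\<close> mp omega_bar_layerwise_dense]
      \<open>0 < D\<close> \<open>a < n\<close> by (simp add: D_def L_def)
  then interpret window_bounded_steps \<alpha> "2 * D" s "n - a" .
  have s1: "s 1 = l1norm (\<pi> i - \<pi> (i - 1))"
    using \<open>i \<in> {1..n}\<close> by (simp add: s_def a_def l1norm_minus_commute)
  have "2 * (2 * D) * 4 ^ K = (4 * real CARD('d) * 4 ^ K) * L"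
    by (simp add: D_def)
  also have "\<dots> \<le> L\<^sup>2"
    using large_L \<open>0 < L\<close> by (simp add: power2_eq_square)
  finally have "2 * (2 * D) * 4 ^ K \<le> s 1"
    using long_step s1 by linarith
  then have bound: "(bregman_gain \<alpha> * s 1 / (4 ^ K * (2 * D))) ^ K \<le> real (n - a)"
    by (rule large_first_step_forces_length)
  have "bregman_gain \<alpha> / (2 * real CARD('d) * 4 ^ K) * L = bregman_gain \<alpha> * L\<^sup>2 / (4 ^ K * (2 * D))"
    using \<open>0 < L\<close> by (simp add: D_def power2_eq_square)
  also have "\<dots> \<le> bregman_gain \<alpha> * s 1 / (4 ^ K * (2 * D))"
    using long_step s1 bregman_gain_pos[OF \<open>1 < \<alpha>\<close>] \<open>0 < D\<close>
    by (intro divide_right_mono mult_left_mono) auto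
  finally have "(bregman_gain \<alpha> / (2 * real CARD('d) * 4 ^ K) * L) ^ K
      \<le> (bregman_gain \<alpha> * s 1 / (4 ^ K * (2 * D))) ^ K"
    using bregman_gain_pos[OF \<open>1 < \<alpha>\<close>] \<open>0 < L\<close> by (intro power_mono) auto
  also have "\<dots> \<le> real n"
    using bound by simp
  finally show ?thesis .
qed

lemma minimizing_path_step_le_powr:
  fixes \<omega> :: "(nat \<times> (real ^ 'd)) set" and \<pi> :: "nat \<Rightarrow> real ^ 'd" and \<alpha> :: real and K :: nat
  defines "C \<equiv> bregman_gain \<alpha> / (2 * real CARD('d) * 4 ^ K)"
  assumes "1 < \<alpha>" and "0 < K" and "4 / real K \<le> \<zeta>"
    and n_large: "(4 * real CARD('d) * 4 ^ K) powr (real K / 2) < real n" "1 / C ^ K < real n"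
    and mp: "minimizing_path \<alpha> n (omega_bar (2 / real K) n \<omega>) \<pi>" and "i \<in> {1..n}"
  shows "l1norm (\<pi> i - \<pi> (i - 1)) \<le> real n powr \<zeta>"
proof (rule ccontr)
  assume long_step: "\<not> ?thesis"
  define \<theta> where "\<theta> = 2 / real K"
  have "0 < n" "0 < C"
    using \<open>i \<in> {1..n}\<close> bregman_gain_pos[OF \<open>1 < \<alpha>\<close>] by (simp_all add: C_def)
  have "4 * real CARD('d) * 4 ^ K = ((4 * real CARD('d) * 4 ^ K) powr (real K / 2)) powr \<theta>"
    using \<open>0 < K\<close> by (simp add: powr_powr \<theta>_def)
  also have "\<dots> \<le> real n powr \<theta>"
    using n_large(1) \<open>0 < K\<close> by (intro powr_mono2) (auto simp: \<theta>_def)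
  finally have "4 * real CARD('d) * 4 ^ K \<le> real n powr \<theta>" .
  moreover have "(real n powr \<theta>)\<^sup>2 < l1norm (\<pi> i - \<pi> (i - 1))"
  proof -
    have "(real n powr \<theta>)\<^sup>2 = real n powr (2 * \<theta>)"
      by (simp add: power2_eq_square powr_add[symmetric])
    also have "\<dots> \<le> real n powr \<zeta>"
      using \<open>4 / real K \<le> \<zeta>\<close> \<open>0 < n\<close> by (intro powr_mono) (auto simp: \<theta>_def)
    also have "\<dots> < l1norm (\<pi> i - \<pi> (i - 1))"
      using long_step by simp
    finally show ?thesis .
  qed
  ultimately have "(C * real n powr \<theta>) ^ K \<le> real n"
    using minimizing_path_long_step_bound[OF \<open>1 < \<alpha>\<close> mp[folded \<theta>_def] \<open>i \<in> {1..n}\<close>]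
    unfolding C_def by blast
  moreover have "(real n powr \<theta>) ^ K = real n * real n"
  proof -
    have "(real n powr \<theta>) ^ K = (real n powr \<theta>) powr real K"
      using \<open>0 < n\<close> by (simp add: powr_realpow)
    also have "\<dots> = real n * real n"
      using \<open>0 < K\<close> by (simp add: powr_powr \<theta>_def powr_numeral power2_eq_square)
    finally show ?thesis .
  qed
  ultimately have "(C ^ K * real n) * real n \<le> 1 * real n"
    by (simp add: power_mult_distrib)
  then have "real n \<le> 1 / C ^ K"
    using \<open>0 < n\<close> \<open>0 < C\<close> by (simp add: field_simps)
  with n_large(2) show False
    by linarith
qed

text \<open>The bound holds for every configuration \<open>\<omega>\<close>.\<close>

theorem lemma3:
  fixes \<alpha> p :: real
  assumes "\<alpha> > 1" and "0 < p" and "p \<le> 1"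
  shows "\<forall>\<zeta>>0. \<exists>\<theta>. 0 < \<theta> \<and> \<theta> < \<zeta> \<and>
           (\<exists>N::nat. \<forall>n>N. \<forall>\<omega> \<in> (realizations p :: (nat \<times> (real ^ 'd)) set set).
              \<forall>\<pi>. minimizing_path \<alpha> n (omega_bar \<theta> n \<omega>) \<pi> \<longrightarrow>
                 (\<forall>i\<in>{1..n}. l1norm (\<pi> i - \<pi> (i - 1)) \<le> real n powr \<zeta>))"
proof (intro allI impI)
  fix \<zeta> :: real
  assume "0 < \<zeta>"
  define K where "K = nat \<lceil>4 / \<zeta>\<rceil>"
  define R where "R = max ((4 * real CARD('d) * 4 ^ K) powr (real K / 2))
                          (1 / (bregman_gain \<alpha> / (2 * real CARD('d) * 4 ^ K)) ^ K)"
  have "4 / \<zeta> \<le> real K"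
    unfolding K_def by (rule real_nat_ceiling_ge)
  then have "4 \<le> \<zeta> * real K"
    using \<open>0 < \<zeta>\<close> by (simp add: field_simps)
  then have "0 < K"
    by (cases K) auto
  with \<open>4 \<le> \<zeta> * real K\<close> have "4 / real K \<le> \<zeta>" "2 / real K < \<zeta>"
    by (simp_all add: field_simps)
  have "l1norm (\<pi> i - \<pi> (i - 1)) \<le> real n powr \<zeta>"
    if "nat \<lceil>R\<rceil> < n" and mp: "minimizing_path \<alpha> n (omega_bar (2 / real K) n \<omega>) \<pi>"
      and "i \<in> {1..n}"
    for n \<omega> and \<pi> :: "nat \<Rightarrow> real ^ 'd" and i
  proof (rule minimizing_path_step_le_powr[OF \<open>\<alpha> > 1\<close> \<open>0 < K\<close> \<open>4 / real K \<le> \<zeta>\<close> _ _ mp \<open>i \<in> {1..n}\<close>])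
    show "(4 * real CARD('d) * 4 ^ K) powr (real K / 2) < real n"
      and "1 / (bregman_gain \<alpha> / (2 * real CARD('d) * 4 ^ K)) ^ K < real n"
      using \<open>nat \<lceil>R\<rceil> < n\<close> real_nat_ceiling_ge[of R] unfolding R_def by linarith+
  qed
  with \<open>0 < K\<close> \<open>2 / real K < \<zeta>\<close> show "\<exists>\<theta>>0. \<theta> < \<zeta> \<and> (\<exists>N. \<forall>n>N. \<forall>\<omega> \<in> (realizations p :: (nat \<times> (real ^ 'd)) set set).
      \<forall>\<pi>. minimizing_path \<alpha> n (omega_bar \<theta> n \<omega>) \<pi> \<longrightarrow>
        (\<forall>i\<in>{1..n}. l1norm (\<pi> i - \<pi> (i - 1)) \<le> real n powr \<zeta>))"
    by (intro exI[of _ "2 / real K"] conjI exI[of _ "nat \<lceil>R\<rceil>"]) auto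
qed

end
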